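(* Let $z_1,z_2,\dots$ be i.i.d. standard normal random variables, let $I_1\ge 1$ and $I_2\ge 2$ be integers, and set $N_1=I_1$, $N_2=I_1+I_2$. Let $0<r_1<r_2$ and define the events $\zeta_1=\{\sum_{j=1}^{N_1} z_j^2>r_1^2\}$ and $\zeta_2=\{\sum_{j=1}^{N_2} z_j^2>r_2^2\}$. Let $p=\Pr(\chi^2_{I_1}>r_2^2)$, $$K=\frac{e^{-\frac12(r_2^2-I_2)}}{2^{N_1/2}\sqrt{\pi}\,I_2^{(I_2-1)/2}\,\Gamma(N_1/2)},\qquad g(t)=\frac{t^{N_1/2-1}(r_2^2-t)^{I_2/2}}{r_2^2-I_2+2-t},$$ $\underline{\delta}=(I_2-2)/r_2^2$ and $\overline{\delta}=(r_2^2-r_1^2)/r_2^2$. Then $$p+\frac{\sqrt{\pi}K}{2}\int_{r_1^2}^{r_2^2}(r_2^2-t)^{I_2/2-1}t^{I_1/2-1}\,dt\ \le\ \Pr(\zeta_1\cap\zeta_2)$$ and $$\Pr(\zeta_1\cap\zeta_2)\le p+\inf_{\delta\in(\underline{\delta},\overline{\delta})}\left[K\int_{r_1^2}^{(1-\delta)r_2^2}g(t)\,dt+\int_{(1-\delta)r_2^2}^{r_2^2}f_{\chi^2_{I_1}}(t)\,dt\right].$$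
   Context: For a positive integer $k$, $\chi^2_k$ denotes a random variable with the central chi-square distribution with $k$ degrees of freedom, and $f_{\chi^2_k}$ denotes its probability density function. $\Gamma$ is the Gamma function. *)

theory Defs
  imports "HOL-Probability.Probability"
begin

definition chi2_density :: "nat \<Rightarrow> real \<Rightarrow> real" where
  "chi2_density k t =
     (if t > 0 then t powr (real k / 2 - 1) * exp (- t / 2) / (2 powr (real k / 2) * Gamma (real k / 2))
      else 0)"

end

theory Submission
  imports Defs "HOL-Real_Asymp.Real_Asymp"
begin

text \<open>
  Put X = z1^2 + ... + zN1^2 and Y = z(N1+1)^2 + ... + zN2^2, independent chi-square variables
  with I1 and I2 degrees of freedom. Then Pr(\<zeta>1 \<inter> \<zeta>2) is the integral over x > r1^2 of
  f_I1(x) Pr(Y > r2^2 - x), and the part x > r2^2 contributes exactly p. For k \<ge> 2, comparing the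
  density f_k on (s, \<infinity>) with an exponential brackets the tail,
  2 f_k(s) \<le> Pr(\<chi>^2_k > s) \<le> 2 s f_k(s) / (s - k + 2), the second bound for s > k - 2.
  Inserting the bracket on (r1^2, r2^2) (for the upper bound only on (r1^2, (1 - \<delta>) r2^2),
  bounding the tail by 1 beyond) gives the two integrands, up to the factor
  e^(k/2) 2^(k/2) \<Gamma>(k/2) / k^((k-1)/2). This factor lies between 2 sqrt \<pi> and 4, because
  \<Gamma>(x) e^x / x^(x - 1/2) decreases along x, x + 1, ... towards sqrt (2 \<pi>) (the limit is
  identified through Wallis' product) and is at most 2 sqrt 2 at x = 1 and x = 3/2.
\<close>

section \<open>Stirling-type bounds for Gamma at half-integers\<close>

definition stirling_ratio :: "real \<Rightarrow> real" where
  "stirling_ratio x = Gamma x * exp x / x powr (x - 1/2)"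

lemma stirling_ratio_pos: "x > 0 \<Longrightarrow> stirling_ratio x > 0"
  unfolding stirling_ratio_def by (intro divide_pos_pos mult_pos_pos Gamma_real_pos) auto

lemma ln_stirling_ratio:
  assumes "x > 0"
  shows "ln (stirling_ratio x) = ln (Gamma x) + x - (x - 1/2) * ln x"
proof -
  have "Gamma x \<noteq> 0" using Gamma_real_pos[OF assms] by simp
  thus ?thesis using assms by (simp add: stirling_ratio_def ln_div ln_mult ln_powr)
qed

lemma ln_stirling_ratio_diff:
  assumes "x > 0"
  shows "ln (stirling_ratio x) - ln (stirling_ratio (x + 1)) = (x + 1/2) * (ln (x + 1) - ln x) - 1"
proof -
  have "Gamma (x + 1) = x * Gamma x"
    using assms by (subst Gamma_plus1) (auto simp: nonpos_Ints_def)
  hence "ln (Gamma (x + 1)) = ln x + ln (Gamma x)"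
    using assms Gamma_real_pos[OF assms] by (simp add: ln_mult_pos)
  thus ?thesis using assms ln_stirling_ratio[of x] ln_stirling_ratio[of "x + 1"] by (simp add: algebra_simps)
qed

lemma stirling_ratio_plus1_le:
  assumes "x > 0"
  shows "stirling_ratio (x + 1) \<le> stirling_ratio x"
proof -
  have "2 * ((x + 1) - x) / (x + (x + 1)) \<le> ln (x + 1) - ln x"
    using ln_inverse_approx_ge[of x "x + 1"] assms by simp
  hence "1 \<le> (x + 1/2) * (ln (x + 1) - ln x)" using assms by (simp add: field_simps)
  hence "ln (stirling_ratio (x + 1)) \<le> ln (stirling_ratio x)"
    using ln_stirling_ratio_diff[OF assms] by simp
  thus ?thesis using assms stirling_ratio_pos[of x] stirling_ratio_pos[of "x + 1"] by simp
qed

lemma stirling_ratio_plus1_ge: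
  assumes "x > 0"
  shows "stirling_ratio x * exp (- 1 / (4 * x)) \<le> stirling_ratio (x + 1) * exp (- 1 / (4 * (x + 1)))"
proof -
  have "ln (x + 1) - ln x \<le> (inverse x + inverse (x + 1)) / 2"
    using ln_inverse_approx_le[of x 1] assms by simp
  hence "(x + 1/2) * (ln (x + 1) - ln x) \<le> (x + 1/2) * ((inverse x + inverse (x + 1)) / 2)"
    using assms by (intro mult_left_mono) auto
  also have "\<dots> = 1 + 1 / (4 * x) - 1 / (4 * (x + 1))"
  proof -
    have "x * (x + 1) > 0" using assms by simp
    thus ?thesis using assms by (simp add: field_simps)
  qed
  finally have "ln (stirling_ratio x) - 1 / (4 * x) \<le> ln (stirling_ratio (x + 1)) - 1 / (4 * (x + 1))"
    using ln_stirling_ratio_diff[OF assms] by simp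
  hence "exp (ln (stirling_ratio x) - 1 / (4 * x)) \<le> exp (ln (stirling_ratio (x + 1)) - 1 / (4 * (x + 1)))"
    by simp
  moreover have "exp (ln (stirling_ratio y) - 1 / (4 * y)) = stirling_ratio y * exp (- 1 / (4 * y))"
    if "y > 0" for y
    using exp_add[of "ln (stirling_ratio y)" "- 1 / (4 * y)"] stirling_ratio_pos[OF that] by simp
  ultimately show ?thesis using assms by (metis add_pos_pos zero_less_one)
qed

lemma stirling_ratio_plus_nat_le: "x > 0 \<Longrightarrow> stirling_ratio (x + real m) \<le> stirling_ratio x"
proof (induction m)
  case (Suc m)
  have "stirling_ratio (x + real (Suc m)) = stirling_ratio ((x + real m) + 1)" by (simp add: algebra_simps)
  also have "\<dots> \<le> stirling_ratio (x + real m)" using Suc.prems by (intro stirling_ratio_plus1_le) auto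
  finally show ?case using Suc by simp
qed simp

lemma stirling_ratio_plus_nat_ge:
  "x > 0 \<Longrightarrow> stirling_ratio x * exp (- 1 / (4 * x)) \<le> stirling_ratio (x + real m) * exp (- 1 / (4 * (x + real m)))"
proof (induction m)
  case (Suc m)
  have "stirling_ratio (x + real m) * exp (- 1 / (4 * (x + real m)))
        \<le> stirling_ratio ((x + real m) + 1) * exp (- 1 / (4 * ((x + real m) + 1)))"
    using Suc.prems by (intro stirling_ratio_plus1_ge) auto
  moreover have "x + real (Suc m) = (x + real m) + 1" by simp
  ultimately show ?case using Suc.IH[OF Suc.prems] by (simp only:)
qed simp

lemma prod_wallis_eq_fact:
  "(\<Prod>k=1..n. (4 * real k ^ 2) / (4 * real k ^ 2 - 1)) =
     2 ^ (4 * n) * fact n ^ 4 / (fact (2 * n) ^ 2 * (2 * real n + 1))"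
proof (induction n)
  case (Suc n)
  define F where "F = (fact (2 * n) :: real)"
  have F: "F > 0" by (simp add: F_def)
  have fact_double: "fact (2 * Suc n) = F * (2 * real n + 1) * (2 * real n + 2)"
    by (simp add: F_def algebra_simps)
  have "4 * (1 + real n) ^ 2 - 1 = (2 * real n + 1) * (2 * real n + 3)"
    by (simp add: algebra_simps power2_eq_square)
  hence "(\<Prod>k=1..Suc n. (4 * real k ^ 2) / (4 * real k ^ 2 - 1)) =
      2 ^ (4 * n) * fact n ^ 4 / (F ^ 2 * (2 * real n + 1)) *
      (4 * (real n + 1) ^ 2 / ((2 * real n + 1) * (2 * real n + 3)))"
    using Suc by (simp add: F_def)
  also have "\<dots> = 2 ^ (4 * Suc n) * fact (Suc n) ^ 4 / (fact (2 * Suc n) ^ 2 * (2 * real (Suc n) + 1))"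
    unfolding fact_double using F by (simp add: divide_simps power_add) (simp add: algebra_simps power2_eq_square power4_eq_xxxx)
  finally show ?case .
qed simp

lemma fact_eq_stirling_ratio:
  assumes "n > 0"
  shows "fact n = stirling_ratio (real n) * real n powr (real n + 1/2) / exp (real n)"
proof -
  have "fact n = Gamma (real n + 1)" using Gamma_fact[where 'a=real, of n] by (simp add: add.commute)
  also have "\<dots> = real n * Gamma (real n)"
    using assms by (subst Gamma_plus1) (auto simp: nonpos_Ints_def)
  moreover have "real n powr (real n + 1/2) = real n * real n powr (real n - 1/2)"
    using assms by (simp add: powr_mult_base add.commute)
  ultimately show ?thesis using assms by (simp add: stirling_ratio_def)
qed

lemma prod_wallis_eq_stirling_ratio:
  assumes "n > 0"
  shows "(\<Prod>k=1..n. (4 * real k ^ 2) / (4 * real k ^ 2 - 1)) =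
         stirling_ratio (real n) ^ 4 * real n / (2 * stirling_ratio (2 * real n) ^ 2 * (2 * real n + 1))"
proof -
  define A where "A = real n powr (real n + 1/2)"
  define B where "B = (2 * real n) powr (2 * real n + 1/2)"
  have pos: "A > 0" "B > 0" "stirling_ratio (real n) > 0" "stirling_ratio (2 * real n) > 0"
    using assms by (auto simp: A_def B_def intro!: stirling_ratio_pos)
  have "A ^ 4 = real n powr (4 * real n + 2)"
    unfolding A_def using assms by (subst powr_power) (auto simp: algebra_simps)
  hence A4: "A ^ 4 = real n * real n powr (4 * real n + 1)"
    using assms by (simp add: powr_mult_base algebra_simps)
  have "B ^ 2 = (2 * real n) powr (4 * real n + 1)"
    unfolding B_def using assms by (subst powr_power) (auto simp: algebra_simps)
  also have "\<dots> = 2 ^ (4 * n + 1) * real n powr (4 * real n + 1)"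
    using assms powr_realpow[of 2 "4 * n + 1"] by (simp add: powr_mult add.commute)
  finally have B2: "B ^ 2 * real n = 2 * 2 ^ (4 * n) * A ^ 4"
    using A4 by (simp add: algebra_simps)
  have fact_n: "fact n = stirling_ratio (real n) * A / exp (real n)"
    unfolding A_def using fact_eq_stirling_ratio[OF assms] .
  have fact_2n: "fact (2 * n) = stirling_ratio (2 * real n) * B / exp (2 * real n)"
    unfolding B_def using fact_eq_stirling_ratio[of "2 * n"] assms by simp
  have "(\<Prod>k=1..n. (4 * real k ^ 2) / (4 * real k ^ 2 - 1)) =
      2 ^ (4 * n) * (stirling_ratio (real n) * A) ^ 4 / ((stirling_ratio (2 * real n) * B) ^ 2 * (2 * real n + 1))"
    unfolding prod_wallis_eq_fact fact_n fact_2n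
    by (simp add: power_divide power_mult_distrib field_simps flip: exp_of_nat_mult)
  also have "\<dots> = stirling_ratio (real n) ^ 4 * real n / (2 * stirling_ratio (2 * real n) ^ 2 * (2 * real n + 1))"
  proof -
    have "Q * (stirling_ratio (real n) * A) ^ 4 * (2 * stirling_ratio (2 * real n) ^ 2 * (2 * real n + 1)) =
        stirling_ratio (real n) ^ 4 * real n * ((stirling_ratio (2 * real n) * B) ^ 2 * (2 * real n + 1))"
      if "B ^ 2 * real n = 2 * Q * A ^ 4" for Q
      using that by algebra
    from this[OF B2] show ?thesis using pos by (subst frac_eq_eq) (auto simp: add_pos_pos)
  qed
  finally show ?thesis .
qed

lemma stirling_ratio_nat_convergent:
  obtains L where "(\<lambda>m. stirling_ratio (real m + 1)) \<longlonglongrightarrow> L" "L > 0"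
proof -
  define a where "a m = stirling_ratio (real m + 1)" for m
  have "decseq a"
  proof (rule decseq_SucI)
    fix n
    show "a (Suc n) \<le> a n"
      using stirling_ratio_plus1_le[of "real n + 1"] by (simp add: a_def)
  qed
  moreover have "\<forall>m. 0 \<le> a m"
    unfolding a_def using stirling_ratio_pos by (simp add: less_imp_le)
  ultimately obtain L where L: "a \<longlonglongrightarrow> L"
    by (rule decseq_convergent)
  have "stirling_ratio 1 * exp (- 1 / 4) \<le> a m" for m
  proof -
    have "stirling_ratio 1 * exp (- 1 / (4 * 1)) \<le> stirling_ratio (1 + real m) * exp (- 1 / (4 * (1 + real m)))"
      by (rule stirling_ratio_plus_nat_ge) simp
    also have "\<dots> \<le> stirling_ratio (1 + real m)"
      using stirling_ratio_pos[of "1 + real m"] by (intro mult_left_le) auto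
    finally show ?thesis by (simp add: a_def add.commute)
  qed
  hence "stirling_ratio 1 * exp (- 1 / 4) \<le> L" using L by (intro LIMSEQ_le_const) auto
  moreover have "stirling_ratio 1 * exp (- 1 / 4) > 0" using stirling_ratio_pos[of 1] by simp
  ultimately show ?thesis using that L unfolding a_def by simp
qed

lemma stirling_ratio_nat_LIMSEQ: "(\<lambda>m. stirling_ratio (real m + 1)) \<longlonglongrightarrow> sqrt (2 * pi)"
proof -
  define a where "a m = stirling_ratio (real m + 1)" for m
  obtain L where L: "a \<longlonglongrightarrow> L" and L_pos: "L > 0"
    unfolding a_def[abs_def] by (rule stirling_ratio_nat_convergent)
  have sub: "(\<lambda>m. a (2 * m + 1)) \<longlonglongrightarrow> L"
  proof -
    have "strict_mono (\<lambda>m::nat. 2 * m + 1)" by (rule strict_monoI) simp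
    from LIMSEQ_subseq_LIMSEQ[OF L this] show ?thesis by (simp add: o_def)
  qed
  have frac: "(\<lambda>m. (real m + 1) / (2 * real m + 3)) \<longlonglongrightarrow> 1 / 2" by real_asymp
  have "(\<lambda>m. a m ^ 4 * ((real m + 1) / (2 * real m + 3)) / (2 * a (2 * m + 1) ^ 2))
      \<longlonglongrightarrow> L ^ 4 * (1 / 2) / (2 * L ^ 2)"
    using L_pos by (intro tendsto_intros L sub frac) auto
  moreover have "a m ^ 4 * ((real m + 1) / (2 * real m + 3)) / (2 * a (2 * m + 1) ^ 2) =
      (\<Prod>k=1..Suc m. (4 * real k ^ 2) / (4 * real k ^ 2 - 1))" for m
  proof -
    have "(\<Prod>k=1..Suc m. (4 * real k ^ 2) / (4 * real k ^ 2 - 1)) =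
        stirling_ratio (real (Suc m)) ^ 4 * real (Suc m) /
          (2 * stirling_ratio (2 * real (Suc m)) ^ 2 * (2 * real (Suc m) + 1))"
      by (rule prod_wallis_eq_stirling_ratio) simp
    moreover have "2 * real (Suc m) = real (2 * m + 1) + 1" by simp
    ultimately show ?thesis by (simp add: a_def add.commute)
  qed
  ultimately have "(\<lambda>m. \<Prod>k=1..Suc m. (4 * real k ^ 2) / (4 * real k ^ 2 - 1))
      \<longlonglongrightarrow> L ^ 4 * (1 / 2) / (2 * L ^ 2)"
    by simp
  with LIMSEQ_Suc[OF wallis] have "pi / 2 = L ^ 4 * (1 / 2) / (2 * L ^ 2)"
    by (rule LIMSEQ_unique)
  hence "L ^ 2 = 2 * pi" using L_pos by (simp add: field_simps power2_eq_square power4_eq_xxxx)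
  hence "L = sqrt (2 * pi)" using L_pos by (metis abs_of_pos real_sqrt_abs)
  thus ?thesis using L unfolding a_def by simp
qed

lemma stirling_ratio_one_plus_nat_ge: "sqrt (2 * pi) \<le> stirling_ratio (1 + real n)"
proof (rule LIMSEQ_le_const2)
  show "(\<lambda>m. stirling_ratio (real (m + n) + 1)) \<longlonglongrightarrow> sqrt (2 * pi)"
    using LIMSEQ_ignore_initial_segment[OF stirling_ratio_nat_LIMSEQ, of n] by simp
  show "\<exists>N. \<forall>m\<ge>N. stirling_ratio (real (m + n) + 1) \<le> stirling_ratio (1 + real n)"
    using stirling_ratio_plus_nat_le[of "1 + real n"] by (simp add: algebra_simps)
qed

lemma stirling_ratio_plus_half_ge:
  assumes N: "N > (0::real)"
  shows "stirling_ratio N * exp (- 1 / (4 * N)) \<le> stirling_ratio (N + 1/2)"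
proof -
  have GN: "Gamma N > 0" and GH: "Gamma (N + 1/2) > 0" using N by (auto intro!: Gamma_real_pos)
  have convex: "(ln \<circ> Gamma) ((1 - 1/2) *\<^sub>R (N + 1/2) + (1/2) *\<^sub>R (N + 3/2))
        \<le> (1 - 1/2) * (ln \<circ> Gamma) (N + 1/2) + (1/2) * (ln \<circ> Gamma) (N + 3/2)"
    by (rule convex_onD[OF log_convex_Gamma_real]) (use N in auto)
  have mid: "(1 - 1/2) *\<^sub>R (N + 1/2) + (1/2) *\<^sub>R (N + 3/2) = N + 1" by (simp add: field_simps)
  have "ln (Gamma (N + 1)) = ln N + ln (Gamma N)"
    using N GN by (subst Gamma_plus1) (auto simp: nonpos_Ints_def ln_mult_pos)
  moreover have "ln (Gamma (N + 3/2)) = ln (N + 1/2) + ln (Gamma (N + 1/2))"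
    using Gamma_plus1[of "N + 1/2"] N GH by (simp add: nonpos_Ints_def add.assoc ln_mult_pos)
  ultimately have log_convex: "ln N + ln (Gamma N) \<le> ln (Gamma (N + 1/2)) + ln (N + 1/2) / 2"
    using convex unfolding mid o_def by (simp add: field_simps)
  have "ln (N + 1/2) - ln N \<le> (1/2) * (inverse N + inverse (N + 1/2)) / 2"
    using ln_inverse_approx_le[of N "1/2"] N by simp
  hence "(N + 1/2) * (ln (N + 1/2) - ln N) \<le> (N + 1/2) * ((1/2) * (inverse N + inverse (N + 1/2)) / 2)"
    using N by (intro mult_left_mono) auto
  also have "\<dots> = (1/4) * ((N + 1/2) * inverse N) + (1/4) * ((N + 1/2) * inverse (N + 1/2))"
    by (simp add: algebra_simps)
  also have "\<dots> = 1/2 + 1 / (8 * N)"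
    using N by (simp add: field_simps)
  also have "\<dots> \<le> 1/2 + 1 / (4 * N)"
    using N by (simp add: field_simps)
  finally have "ln (stirling_ratio N) - 1 / (4 * N) \<le> ln (stirling_ratio (N + 1/2))"
    using log_convex N ln_stirling_ratio[of N] ln_stirling_ratio[of "N + 1/2"] by (simp add: algebra_simps)
  hence "exp (ln (stirling_ratio N) + - 1 / (4 * N)) \<le> exp (ln (stirling_ratio (N + 1/2)))"
    by simp
  thus ?thesis
    using stirling_ratio_pos[OF N] stirling_ratio_pos[of "N + 1/2"] N by (simp only: exp_add) simp
qed

lemma stirling_ratio_three_halves_plus_nat_ge: "sqrt (2 * pi) \<le> stirling_ratio (3/2 + real n)"
proof (rule LIMSEQ_le_const2)
  define N where "N m = real (m + n) + 1" for m
  have "(\<lambda>m. stirling_ratio (N m)) \<longlonglongrightarrow> sqrt (2 * pi)"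
    using LIMSEQ_ignore_initial_segment[OF stirling_ratio_nat_LIMSEQ, of n] by (simp add: N_def)
  moreover have "(\<lambda>m. exp (- 1 / (4 * (real m + (real n + 1))))) \<longlonglongrightarrow> 1" by real_asymp
  ultimately show "(\<lambda>m. stirling_ratio (N m) * exp (- 1 / (4 * N m))) \<longlonglongrightarrow> sqrt (2 * pi)"
    using tendsto_mult[of _ "sqrt (2 * pi)" _ _ 1] by (simp add: N_def algebra_simps)
  have "stirling_ratio (N m) * exp (- 1 / (4 * N m)) \<le> stirling_ratio (3/2 + real n)" for m
  proof -
    have "stirling_ratio (N m) * exp (- 1 / (4 * N m)) \<le> stirling_ratio (N m + 1/2)"
      by (rule stirling_ratio_plus_half_ge) (simp add: N_def)
    also have "N m + 1/2 = (3/2 + real n) + real m" by (simp add: N_def)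
    also have "stirling_ratio \<dots> \<le> stirling_ratio (3/2 + real n)" by (rule stirling_ratio_plus_nat_le) simp
    finally show ?thesis .
  qed
  thus "\<exists>M. \<forall>m\<ge>M. stirling_ratio (N m) * exp (- 1 / (4 * N m)) \<le> stirling_ratio (3/2 + real n)"
    by blast
qed

lemma half_nat_cases:
  assumes "k \<ge> (2::nat)"
  obtains m where "real k / 2 = 1 + real m" | m where "real k / 2 = 3/2 + real m"
proof (cases "even k")
  case True
  hence "k = 2 * ((k div 2 - 1) + 1)" using assms by presburger
  thus ?thesis using that(1)[of "k div 2 - 1"] by simp
next
  case False
  hence "k = 2 * ((k - 3) div 2) + 3" using assms by presburger
  thus ?thesis using that(2)[of "(k - 3) div 2"] by simp
qed

lemma stirling_ratio_half_nat_ge: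
  assumes "k \<ge> (2::nat)"
  shows "sqrt (2 * pi) \<le> stirling_ratio (real k / 2)"
  using assms
proof (cases rule: half_nat_cases)
  case (1 m)
  show ?thesis unfolding 1 by (rule stirling_ratio_one_plus_nat_ge)
next
  case (2 m)
  show ?thesis unfolding 2 by (rule stirling_ratio_three_halves_plus_nat_ge)
qed

lemma stirling_ratio_one_three_halves_le: "stirling_ratio 1 \<le> 2 * sqrt 2" "stirling_ratio (3/2) \<le> 2 * sqrt 2"
proof -
  have sqrt2: "2.82 \<le> 2 * sqrt (2::real)"
    using real_le_rsqrt[of "2.82 / 2" 2] by (simp add: power2_eq_square)
  show "stirling_ratio 1 \<le> 2 * sqrt 2" using e_less_272 sqrt2 by (simp add: stirling_ratio_def)
  have "Gamma (3/2 :: real) = Gamma (1/2 + 1)" by simp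
  also have "\<dots> = sqrt pi / 2"
    by (subst Gamma_plus1) (auto dest: nonpos_Ints_nonpos simp: Gamma_one_half_real)
  finally have three_halves: "stirling_ratio (3/2) = sqrt pi * exp (3/2) / 3" by (simp add: stirling_ratio_def)
  have "stirling_ratio (3/2) ^ 2 = pi * exp (3/2) ^ 2 / 9"
    unfolding three_halves by (simp add: power_divide power_mult_distrib)
  also have "exp (3/2 :: real) ^ 2 = exp 1 ^ 3" by (simp flip: exp_of_nat_mult)
  also have "pi * exp 1 ^ 3 / 9 \<le> 3.1416 * 2.72 ^ 3 / 9"
    using e_less_272 pi_approx(2) by (intro divide_right_mono mult_mono power_mono) auto
  also have "\<dots> \<le> (2 * sqrt 2) ^ 2" by (simp add: power3_eq_cube power_mult_distrib)
  finally show "stirling_ratio (3/2) \<le> 2 * sqrt 2" by (rule power2_le_imp_le) simp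
qed

lemma stirling_ratio_half_nat_le:
  assumes "k \<ge> (2::nat)"
  shows "stirling_ratio (real k / 2) \<le> 2 * sqrt 2"
  using assms
proof (cases rule: half_nat_cases)
  case (1 m)
  show ?thesis unfolding 1 using stirling_ratio_plus_nat_le[of 1 m] stirling_ratio_one_three_halves_le(1) by simp
next
  case (2 m)
  show ?thesis unfolding 2 using stirling_ratio_plus_nat_le[of "3/2" m] stirling_ratio_one_three_halves_le(2) by simp
qed

lemma chi2_normalizer_eq:
  assumes "k \<ge> (1::nat)"
  shows "exp (real k / 2) * 2 powr (real k / 2) * Gamma (real k / 2) =
         stirling_ratio (real k / 2) * sqrt 2 * real k powr ((real k - 1) / 2)"
proof -
  define \<alpha> where "\<alpha> = real k / 2"
  have \<alpha>: "\<alpha> > 0" using assms by (simp add: \<alpha>_def)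
  have e1: "(real k - 1) / 2 = \<alpha> - 1/2" by (simp add: \<alpha>_def field_simps)
  have e2: "real k = 2 * \<alpha>" by (simp add: \<alpha>_def)
  have e3: "(2 * \<alpha>) powr (\<alpha> - 1/2) = 2 powr (\<alpha> - 1/2) * \<alpha> powr (\<alpha> - 1/2)"
    using \<alpha> by (simp add: powr_mult)
  have e4: "2 powr \<alpha> = 2 powr (\<alpha> - 1/2) * sqrt 2"
    by (simp add: powr_half_sqrt[symmetric] powr_add[symmetric])
  have "Gamma \<alpha> * exp \<alpha> = stirling_ratio \<alpha> * \<alpha> powr (\<alpha> - 1/2)"
    using \<alpha> by (simp add: stirling_ratio_def)
  thus ?thesis unfolding \<alpha>_def[symmetric] e1 unfolding e2 e3 e4 by (simp add: mult_ac)
qed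

lemma chi2_normalizer_bounds:
  assumes "k \<ge> (2::nat)"
  shows "2 * sqrt pi * real k powr ((real k - 1) / 2) \<le> exp (real k / 2) * 2 powr (real k / 2) * Gamma (real k / 2)"
    and "exp (real k / 2) * 2 powr (real k / 2) * Gamma (real k / 2) \<le> 4 * real k powr ((real k - 1) / 2)"
proof -
  have P: "real k powr ((real k - 1) / 2) > 0" using assms by simp
  have eq: "exp (real k / 2) * 2 powr (real k / 2) * Gamma (real k / 2) =
      stirling_ratio (real k / 2) * sqrt 2 * real k powr ((real k - 1) / 2)"
    using assms by (intro chi2_normalizer_eq) simp
  have "2 * sqrt pi = sqrt (2 * pi) * sqrt 2" by (simp add: real_sqrt_mult)
  also have "\<dots> \<le> stirling_ratio (real k / 2) * sqrt 2"
    using stirling_ratio_half_nat_ge[OF assms] by (intro mult_right_mono) auto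
  finally show "2 * sqrt pi * real k powr ((real k - 1) / 2) \<le> exp (real k / 2) * 2 powr (real k / 2) * Gamma (real k / 2)"
    unfolding eq using P by (intro mult_right_mono) auto
  have "stirling_ratio (real k / 2) * sqrt 2 \<le> 2 * sqrt 2 * sqrt 2"
    using stirling_ratio_half_nat_le[OF assms] by (intro mult_right_mono) auto
  also have "\<dots> = 4" by simp
  finally show "exp (real k / 2) * 2 powr (real k / 2) * Gamma (real k / 2) \<le> 4 * real k powr ((real k - 1) / 2)"
    unfolding eq using P by (intro mult_right_mono) auto
qed

section \<open>Chi-square densities and sums of squared normals\<close>

lemma chi2_density_nonneg: "chi2_density k t \<ge> 0"
  by (cases "k = 0") (auto simp: chi2_density_def intro!: divide_nonneg_pos Gamma_real_pos)

lemma borel_measurable_chi2_density [measurable]: "chi2_density k \<in> borel_measurable borel"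
  unfolding chi2_density_def by measurable

lemma chi2_density_pos:
  "t > 0 \<Longrightarrow> chi2_density k t = t powr (real k / 2 - 1) * exp (- t / 2) / (2 powr (real k / 2) * Gamma (real k / 2))"
  by (simp add: chi2_density_def)

lemma chi2_density_nonpos: "t \<le> 0 \<Longrightarrow> chi2_density k t = 0"
  by (simp add: chi2_density_def)

lemma nn_integral_chi2_density:
  assumes "k > 0"
  shows "(\<integral>\<^sup>+t. ennreal (chi2_density k t) \<partial>lborel) = 1"
proof -
  define \<alpha> where "\<alpha> = real k / 2"
  have \<alpha>: "\<alpha> > 0" using assms by (simp add: \<alpha>_def)
  define c where "c = 2 powr (\<alpha> - 1) / (2 powr \<alpha> * Gamma \<alpha>)"
  have c: "c \<ge> 0" using Gamma_real_pos[OF \<alpha>] by (simp add: c_def)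
  have scaled: "chi2_density k (2 * u) = c * (u powr (\<alpha> - 1) / exp u * indicator {0..} u)" for u
  proof (cases "u > 0")
    case True
    thus ?thesis by (simp add: chi2_density_pos c_def \<alpha>_def[symmetric] powr_mult exp_minus field_simps)
  qed (auto simp: chi2_density_nonpos indicator_def)
  have "(\<integral>\<^sup>+t. ennreal (chi2_density k t) \<partial>lborel) = 2 * (\<integral>\<^sup>+u. ennreal (chi2_density k (0 + 2 * u)) \<partial>lborel)"
    using nn_integral_real_affine[of "\<lambda>t. ennreal (chi2_density k t)" 2 0] by simp
  also have "(\<integral>\<^sup>+u. ennreal (chi2_density k (0 + 2 * u)) \<partial>lborel)
      = ennreal c * (\<integral>\<^sup>+u. ennreal (u powr (\<alpha> - 1) / exp u) * indicator {0..} u \<partial>lborel)"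
    using c by (subst nn_integral_cmult[symmetric]) (auto simp: scaled ennreal_mult[symmetric] indicator_def intro!: nn_integral_cong)
  also have "(\<integral>\<^sup>+u. ennreal (u powr (\<alpha> - 1) / exp u) * indicator {0..} u \<partial>lborel) = ennreal (Gamma \<alpha>)"
    by (rule nn_integral_has_integral_lebesgue'[OF _ Gamma_integral_real[OF \<alpha>]]) simp
  also have "2 * (ennreal c * ennreal (Gamma \<alpha>)) = ennreal (2 * c * Gamma \<alpha>)"
    using c Gamma_real_pos[OF \<alpha>] by (simp add: ennreal_mult[symmetric] mult.assoc flip: ennreal_numeral)
  also have "2 * c * Gamma \<alpha> = 1"
    using Gamma_real_pos[OF \<alpha>] by (simp add: c_def powr_diff)
  finally show ?thesis by simp
qed

lemma chi2_density_one_square: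
  assumes "y > 0"
  shows "chi2_density 1 (y ^ 2) * (2 * y) = 2 * std_normal_density y"
proof -
  have "(y ^ 2) powr (real 1 / 2 - 1) = (y powr 2) powr (- 1/2)"
    using assms by (simp add: powr_realpow)
  also have "\<dots> = 1 / y" using assms by (simp add: powr_powr powr_minus_divide)
  finally have "(y ^ 2) powr (real 1 / 2 - 1) = 1 / y" .
  moreover have "2 powr (real 1 / 2) * Gamma (real 1 / 2) = sqrt (2 * pi)"
    by (simp add: powr_half_sqrt Gamma_one_half_real real_sqrt_mult)
  ultimately show ?thesis
    using assms by (simp add: chi2_density_pos std_normal_density_def)
qed

lemma nn_integral_chi2_density_one_atMost:
  assumes "a \<ge> 0"
  shows "(\<integral>\<^sup>+t. ennreal (chi2_density 1 t * indicator {..a} t) \<partial>lborel) =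
         (\<integral>\<^sup>+y. ennreal (2 * std_normal_density y * indicator {0<..sqrt a} y) \<partial>lborel)"
proof -
  have "(\<integral>\<^sup>+t. ennreal (chi2_density 1 t * indicator {..a} t) \<partial>lborel) =
        (\<integral>\<^sup>+t. ennreal (chi2_density 1 t * indicator {0 ^ 2..sqrt a ^ 2} t) \<partial>lborel)"
    using assms by (intro nn_integral_cong) (auto simp: chi2_density_nonpos split: split_indicator)
  also have "\<dots> = (\<integral>\<^sup>+y. ennreal (chi2_density 1 (y ^ 2) * (2 * y) * indicator {0..sqrt a} y) \<partial>lborel)"
    by (rule nn_integral_substitution[where g="\<lambda>y. y ^ 2" and g'="\<lambda>y. 2 * y"])
       (unfold set_borel_measurable_def, measurable,
        auto intro!: derivative_eq_intros continuous_intros simp: assms)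
  also have "\<dots> = (\<integral>\<^sup>+y. ennreal (2 * std_normal_density y * indicator {0<..sqrt a} y) \<partial>lborel)"
    by (intro nn_integral_cong) (auto simp: chi2_density_one_square[unfolded One_nat_def] split: split_indicator)
  finally show ?thesis .
qed

lemma nn_integral_std_normal_square_le:
  assumes "a \<ge> 0"
  shows "(\<integral>\<^sup>+y. ennreal (std_normal_density y) * indicator {y. y ^ 2 \<le> a} y \<partial>lborel) =
         (\<integral>\<^sup>+y. ennreal (2 * std_normal_density y * indicator {0<..sqrt a} y) \<partial>lborel)"
proof -
  let ?\<phi> = std_normal_density and ?s = "sqrt a"
  have "(\<integral>\<^sup>+y. ennreal (?\<phi> y) * indicator {y. y ^ 2 \<le> a} y \<partial>lborel) =
     (\<integral>\<^sup>+y. ennreal (?\<phi> y * indicator {-?s..<0} y) + ennreal (?\<phi> y * indicator {0..?s} y) \<partial>lborel)"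
  proof (intro nn_integral_cong)
    fix y :: real
    have "y ^ 2 \<le> ?s ^ 2 \<longleftrightarrow> -?s \<le> y \<and> y \<le> ?s"
      by (metis abs_le_iff abs_of_nonneg minus_le_iff power2_le_iff_abs_le real_sqrt_ge_zero[OF assms])
    hence "y ^ 2 \<le> a \<longleftrightarrow> -?s \<le> y \<and> y \<le> ?s" using assms by simp
    thus "ennreal (?\<phi> y) * indicator {y. y ^ 2 \<le> a} y =
       ennreal (?\<phi> y * indicator {-?s..<0} y) + ennreal (?\<phi> y * indicator {0..?s} y)"
      by (auto split: split_indicator)
  qed
  also have "\<dots> = (\<integral>\<^sup>+y. ennreal (?\<phi> y * indicator {-?s..<0} y) \<partial>lborel) +
                  (\<integral>\<^sup>+y. ennreal (?\<phi> y * indicator {0..?s} y) \<partial>lborel)"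
    by (rule nn_integral_add) auto
  also have "(\<integral>\<^sup>+y. ennreal (?\<phi> y * indicator {-?s..<0} y) \<partial>lborel) =
             (\<integral>\<^sup>+y. ennreal (?\<phi> y * indicator {0<..?s} y) \<partial>lborel)"
  proof -
    have "(\<integral>\<^sup>+y. ennreal (?\<phi> y * indicator {-?s..<0} y) \<partial>lborel) =
        ennreal \<bar>-1\<bar> * (\<integral>\<^sup>+y. ennreal (?\<phi> (0 + (-1) * y) * indicator {-?s..<0} (0 + (-1) * y)) \<partial>lborel)"
      by (rule nn_integral_real_affine) auto
    thus ?thesis by (simp add: std_normal_density_def indicator_def conj_commute)
  qed
  also have "(\<integral>\<^sup>+y. ennreal (?\<phi> y * indicator {0..?s} y) \<partial>lborel) =
             (\<integral>\<^sup>+y. ennreal (?\<phi> y * indicator {0<..?s} y) \<partial>lborel)"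
    by (intro nn_integral_cong_AE) (auto intro!: AE_I[where N="{0}"] split: split_indicator)
  also have "(\<integral>\<^sup>+y. ennreal (?\<phi> y * indicator {0<..?s} y) \<partial>lborel) +
             (\<integral>\<^sup>+y. ennreal (?\<phi> y * indicator {0<..?s} y) \<partial>lborel) =
             (\<integral>\<^sup>+y. ennreal (2 * ?\<phi> y * indicator {0<..?s} y) \<partial>lborel)"
    by (subst nn_integral_add[symmetric]) (auto simp: ennreal_plus[symmetric] simp del: ennreal_plus intro!: nn_integral_cong)
  finally show ?thesis .
qed

lemma (in prob_space) distributed_square_std_normal:
  assumes Z: "distributed M lborel Z std_normal_density"
  shows "distributed M lborel (\<lambda>\<omega>. Z \<omega> ^ 2) (chi2_density 1)"
proof (rule distributedI_borel_atMost[where g="\<lambda>a. measure M {\<omega>\<in>space M. Z \<omega> ^ 2 \<le> a}"])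
  show "(\<lambda>\<omega>. Z \<omega> ^ 2) \<in> borel_measurable M" using distributed_measurable[OF Z] by simp
  show "AE x in lborel. 0 \<le> chi2_density 1 x" by (simp add: chi2_density_nonneg)
  fix a :: real
  show "emeasure M {\<omega>\<in>space M. Z \<omega> ^ 2 \<le> a} = ennreal (measure M {\<omega>\<in>space M. Z \<omega> ^ 2 \<le> a})"
    by (simp add: emeasure_eq_measure)
  have "emeasure M (Z -` {y. y ^ 2 \<le> a} \<inter> space M) =
        (\<integral>\<^sup>+y. ennreal (std_normal_density y) * indicator {y. y ^ 2 \<le> a} y \<partial>lborel)"
    by (rule distributed_emeasure[OF Z]) measurable
  also have "\<dots> = (\<integral>\<^sup>+t. ennreal (chi2_density 1 t * indicator {..a} t) \<partial>lborel)"
  proof (cases "a < 0")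
    case True
    hence "{y::real. y ^ 2 \<le> a} = {}" by (auto simp: not_le intro: less_le_trans[OF True])
    moreover have "(\<integral>\<^sup>+t. ennreal (chi2_density 1 t * indicator {..a} t) \<partial>lborel) = 0"
      using True by (subst nn_integral_0_iff_AE) (auto simp: chi2_density_nonpos split: split_indicator)
    ultimately show ?thesis by simp
  next
    case False
    thus ?thesis using nn_integral_std_normal_square_le[of a] nn_integral_chi2_density_one_atMost[of a] by simp
  qed
  also have "Z -` {y. y ^ 2 \<le> a} \<inter> space M = {\<omega>\<in>space M. Z \<omega> ^ 2 \<le> a}" by auto
  finally show "(\<integral>\<^sup>+t. ennreal (chi2_density 1 t * indicator {..a} t) \<partial>lborel) =
      ennreal (measure M {\<omega>\<in>space M. Z \<omega> ^ 2 \<le> a})"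
    by (simp add: emeasure_eq_measure)
qed measurable

lemma powr_beta_kernel_scale:
  fixes a b x v :: real
  assumes "x > 0" "0 < v" "v < 1"
  shows "(x - x * v) powr (a - 1) * (x * v) powr (b - 1) = x powr (a + b - 2) * (v powr (b - 1) * (1 - v) powr (a - 1))"
proof -
  have "(x - x * v) powr (a - 1) = x powr (a - 1) * (1 - v) powr (a - 1)"
    using assms by (subst powr_mult[symmetric]) (auto simp: algebra_simps)
  moreover have "(x * v) powr (b - 1) = x powr (b - 1) * v powr (b - 1)"
    using assms by (subst powr_mult) auto
  moreover have "x powr (a - 1) * x powr (b - 1) = x powr (a + b - 2)"
    using assms by (simp add: powr_add[symmetric])
  ultimately show ?thesis by (simp add: mult_ac)
qed

lemma nn_integral_beta_kernel:
  assumes "a > 0" "b > (0::real)" "x > 0"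
  shows "(\<integral>\<^sup>+y. ennreal ((x - y) powr (a - 1) * y powr (b - 1) * indicator {0<..<x} y) \<partial>lborel)
         = ennreal (x powr (a + b - 1) * Beta b a)"
proof -
  define F where "F y = (x - y) powr (a - 1) * y powr (b - 1) * indicator {0<..<x} y" for y
  have "(\<integral>\<^sup>+y. ennreal (F y) \<partial>lborel) = ennreal x * (\<integral>\<^sup>+v. ennreal (F (0 + x * v)) \<partial>lborel)"
    using nn_integral_real_affine[of "\<lambda>y. ennreal (F y)" x 0] assms by (simp add: F_def)
  also have "(\<integral>\<^sup>+v. ennreal (F (0 + x * v)) \<partial>lborel) =
      (\<integral>\<^sup>+v. ennreal (x powr (a + b - 2)) * (ennreal (v powr (b - 1) * (1 - v) powr (a - 1)) * indicator {0..1} v) \<partial>lborel)"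
  proof (rule nn_integral_cong_AE)
    show "AE v in lborel. ennreal (F (0 + x * v)) =
        ennreal (x powr (a + b - 2)) * (ennreal (v powr (b - 1) * (1 - v) powr (a - 1)) * indicator {0..1} v)"
      using AE_lborel_singleton[of 0] AE_lborel_singleton[of 1]
    proof eventually_elim
      case (elim v)
      have "0 < x * v \<and> x * v < x \<longleftrightarrow> 0 < v \<and> v < 1"
        using assms by (auto simp: zero_less_mult_iff)
      thus ?case using elim assms powr_beta_kernel_scale[OF assms(3), of v a b]
        by (auto simp: F_def indicator_def ennreal_mult[symmetric])
    qed
  qed
  also have "\<dots> = ennreal (x powr (a + b - 2)) * ennreal (Beta b a)"
  proof -
    have "(\<integral>\<^sup>+v. ennreal (v powr (b - 1) * (1 - v) powr (a - 1)) * indicator {0..1} v \<partial>lborel) = ennreal (Beta b a)"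
      by (rule nn_integral_has_integral_lebesgue'[OF _ has_integral_Beta_real[OF assms(2,1)]]) auto
    thus ?thesis by (subst nn_integral_cmult) auto
  qed
  also have "ennreal x * (ennreal (x powr (a + b - 2)) * ennreal (Beta b a)) = ennreal (x powr (a + b - 1) * Beta b a)"
  proof -
    have "Beta b a \<ge> 0"
      using assms Gamma_real_pos[of a] Gamma_real_pos[of b] Gamma_real_pos[of "b + a"] by (simp add: Beta_def)
    moreover have "x * x powr (a + b - 2) = x powr (a + b - 1)"
      using assms by (simp add: powr_mult_base)
    ultimately show ?thesis using assms by (simp add: ennreal_mult[symmetric] mult.assoc)
  qed
  finally show ?thesis by (simp add: F_def)
qed

lemma chi2_density_convolution:
  assumes "a > 0" "b > 0"
  shows "(\<integral>\<^sup>+y. ennreal (chi2_density a (x - y)) * ennreal (chi2_density b y) \<partial>lborel) =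
         ennreal (chi2_density (a + b) x)"
proof (cases "x > 0")
  case x: True
  define \<alpha> \<beta> where "\<alpha> = real a / 2" and "\<beta> = real b / 2"
  have \<alpha>: "\<alpha> > 0" and \<beta>: "\<beta> > 0" using assms by (auto simp: \<alpha>_def \<beta>_def)
  define C where "C = exp (- x / 2) / (2 powr \<alpha> * Gamma \<alpha> * (2 powr \<beta> * Gamma \<beta>))"
  have C: "C \<ge> 0" using Gamma_real_pos[OF \<alpha>] Gamma_real_pos[OF \<beta>] by (simp add: C_def)
  have "ennreal (chi2_density a (x - y)) * ennreal (chi2_density b y) =
      ennreal C * ennreal ((x - y) powr (\<alpha> - 1) * y powr (\<beta> - 1) * indicator {0<..<x} y)" for y
  proof (cases "0 < y \<and> y < x")
    case True
    have "exp (- (x - y) / 2) * exp (- y / 2) = exp (- x / 2)"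
      by (simp add: exp_add[symmetric] field_simps)
    hence "chi2_density a (x - y) * chi2_density b y = C * ((x - y) powr (\<alpha> - 1) * y powr (\<beta> - 1))"
      using True by (simp add: chi2_density_pos C_def \<alpha>_def[symmetric] \<beta>_def[symmetric] field_simps)
    thus ?thesis using True C by (simp add: ennreal_mult[symmetric] chi2_density_nonneg)
  qed (auto simp: chi2_density_nonpos)
  hence "(\<integral>\<^sup>+y. ennreal (chi2_density a (x - y)) * ennreal (chi2_density b y) \<partial>lborel) =
      ennreal C * ennreal (x powr (\<alpha> + \<beta> - 1) * Beta \<beta> \<alpha>)"
    using nn_integral_beta_kernel[OF \<alpha> \<beta> x] by (simp add: nn_integral_cmult)
  also have "\<dots> = ennreal (chi2_density (a + b) x)"
  proof -
    have ab: "real (a + b) / 2 = \<alpha> + \<beta>" by (simp add: \<alpha>_def \<beta>_def add_divide_distrib)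
    have "2 powr (\<alpha> + \<beta>) = 2 powr \<alpha> * 2 powr \<beta>" by (simp add: powr_add)
    moreover have "Gamma \<alpha> > 0" "Gamma \<beta> > 0" "Gamma (\<alpha> + \<beta>) > 0"
      using \<alpha> \<beta> by (auto intro!: Gamma_real_pos)
    ultimately show ?thesis
      unfolding chi2_density_pos[OF x] ab using x C by (simp add: C_def Beta_def ennreal_mult[symmetric] field_simps)
  qed
  finally show ?thesis .
next
  case False
  hence vanish: "ennreal (chi2_density a (x - y)) * ennreal (chi2_density b y) = 0" for y
    by (cases "y \<le> 0") (simp_all add: chi2_density_nonpos)
  have "(\<integral>\<^sup>+y. ennreal (chi2_density a (x - y)) * ennreal (chi2_density b y) \<partial>lborel) = 0"
    by (simp only: vanish) simp
  thus ?thesis using False by (simp add: chi2_density_nonpos)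
qed

lemma (in prob_space) distributed_add_chi2:
  assumes "indep_var borel X borel Y" and "a > 0" "b > 0"
    and "distributed M lborel X (chi2_density a)" "distributed M lborel Y (chi2_density b)"
  shows "distributed M lborel (\<lambda>\<omega>. X \<omega> + Y \<omega>) (chi2_density (a + b))"
  using distributed_convolution[OF assms(1,4,5)] chi2_density_convolution[OF assms(2,3)] by simp

lemma (in prob_space) indep_var_sum_disjoint:
  fixes X :: "'i \<Rightarrow> 'a \<Rightarrow> real"
  assumes "indep_vars (\<lambda>_. borel) X I"
    and "finite A" "finite B" "A \<inter> B = {}" "A \<subseteq> I" "B \<subseteq> I"
  shows "indep_var borel (\<lambda>\<omega>. \<Sum>i\<in>A. X i \<omega>) borel (\<lambda>\<omega>. \<Sum>i\<in>B. X i \<omega>)"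
proof -
  have "indep_var
    borel ((\<lambda>f. \<Sum>i\<in>A. f i) \<circ> (\<lambda>\<omega>. restrict (\<lambda>i. X i \<omega>) A))
    borel ((\<lambda>f. \<Sum>i\<in>B. f i) \<circ> (\<lambda>\<omega>. restrict (\<lambda>i. X i \<omega>) B))"
    using assms by (intro indep_var_compose[OF indep_var_restrict[OF assms(1)]]) auto
  thus ?thesis by (simp add: o_def cong: sum.cong)
qed

lemma (in prob_space) distributed_sum_squares_std_normal:
  assumes indep: "indep_vars (\<lambda>_. borel) Z I"
    and normal: "\<And>i. i \<in> I \<Longrightarrow> distributed M lborel (Z i) std_normal_density"
    and "finite J" "J \<noteq> {}" "J \<subseteq> I"
  shows "distributed M lborel (\<lambda>\<omega>. \<Sum>j\<in>J. Z j \<omega> ^ 2) (chi2_density (card J))"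
  using \<open>finite J\<close> \<open>J \<noteq> {}\<close> \<open>J \<subseteq> I\<close>
proof (induction rule: finite_ne_induct)
  case (singleton i)
  thus ?case using distributed_square_std_normal[OF normal[of i]] by simp
next
  case (insert i J)
  have "indep_vars (\<lambda>_. borel) (\<lambda>j \<omega>. Z j \<omega> ^ 2) I"
    using indep_vars_compose2[OF indep, of "\<lambda>_ x. x ^ 2" "\<lambda>_. borel"] by simp
  hence "indep_var borel (\<lambda>\<omega>. \<Sum>j\<in>{i}. Z j \<omega> ^ 2) borel (\<lambda>\<omega>. \<Sum>j\<in>J. Z j \<omega> ^ 2)"
    using insert by (intro indep_var_sum_disjoint) auto
  hence "distributed M lborel (\<lambda>\<omega>. Z i \<omega> ^ 2 + (\<Sum>j\<in>J. Z j \<omega> ^ 2)) (chi2_density (1 + card J))"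
    using insert distributed_square_std_normal[OF normal[of i]]
    by (intro distributed_add_chi2) (auto simp: card_gt_0_iff)
  thus ?case using insert by simp
qed

lemma (in prob_space) emeasure_indep_first_and_sum_gt:
  fixes X Y :: "'a \<Rightarrow> real"
  assumes "indep_var borel X borel Y"
    and X: "distributed M lborel X f" and Y: "distributed M lborel Y g"
  shows "emeasure M {\<omega> \<in> space M. R1 < X \<omega> \<and> R < X \<omega> + Y \<omega>} =
         (\<integral>\<^sup>+x. f x * indicator {R1<..} x * (\<integral>\<^sup>+y. g y * indicator {R - x<..} y \<partial>lborel) \<partial>lborel)"
proof -
  note [measurable] = distributed_borel_measurable[OF X] distributed_borel_measurable[OF Y]
  define S where "S = {p \<in> space (lborel \<Otimes>\<^sub>M lborel). R1 < fst p \<and> R < fst p + snd p}"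
  have [measurable]: "S \<in> sets (lborel \<Otimes>\<^sub>M lborel)" unfolding S_def by measurable
  have "distributed M (lborel \<Otimes>\<^sub>M lborel) (\<lambda>\<omega>. (X \<omega>, Y \<omega>)) (\<lambda>(x, y). f x * g y)"
    using assms by (intro distributed_joint_indep lborel.sigma_finite_measure_axioms)
                   (auto intro: indep_var_compose[of borel X borel Y id lborel id lborel, simplified])
  hence "emeasure M ((\<lambda>\<omega>. (X \<omega>, Y \<omega>)) -` S \<inter> space M) =
      (\<integral>\<^sup>+p. (\<lambda>(x, y). f x * g y) p * indicator S p \<partial>(lborel \<Otimes>\<^sub>M lborel))"
    by (rule distributed_emeasure) measurable
  also have "\<dots> = (\<integral>\<^sup>+x. (\<integral>\<^sup>+y. f x * g y * indicator S (x, y) \<partial>lborel) \<partial>lborel)"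
    by (subst lborel.nn_integral_fst[symmetric]) (simp_all split: prod.split)
  also have "\<dots> = (\<integral>\<^sup>+x. f x * indicator {R1<..} x * (\<integral>\<^sup>+y. g y * indicator {R - x<..} y \<partial>lborel) \<partial>lborel)"
  proof (intro nn_integral_cong)
    fix x :: real
    have "(\<integral>\<^sup>+y. f x * g y * indicator S (x, y) \<partial>lborel) =
        (\<integral>\<^sup>+y. (f x * indicator {R1<..} x) * (g y * indicator {R - x<..} y) \<partial>lborel)"
      by (intro nn_integral_cong) (auto simp: S_def space_pair_measure split: split_indicator)
    thus "(\<integral>\<^sup>+y. f x * g y * indicator S (x, y) \<partial>lborel) =
        f x * indicator {R1<..} x * (\<integral>\<^sup>+y. g y * indicator {R - x<..} y \<partial>lborel)"
      by (simp add: nn_integral_cmult)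
  qed
  also have "(\<lambda>\<omega>. (X \<omega>, Y \<omega>)) -` S \<inter> space M = {\<omega> \<in> space M. R1 < X \<omega> \<and> R < X \<omega> + Y \<omega>}"
    by (auto simp: S_def space_pair_measure)
  finally show ?thesis .
qed

section \<open>Tails of the chi-square distribution\<close>

definition chi2_tail :: "nat \<Rightarrow> real \<Rightarrow> ennreal" where
  "chi2_tail k s = (\<integral>\<^sup>+y. ennreal (chi2_density k y) * indicator {s<..} y \<partial>lborel)"

lemma chi2_tail_le_1:
  assumes "k > 0"
  shows "chi2_tail k s \<le> 1"
proof -
  have "chi2_tail k s \<le> (\<integral>\<^sup>+y. ennreal (chi2_density k y) \<partial>lborel)"
    unfolding chi2_tail_def by (intro nn_integral_mono) (auto split: split_indicator)
  thus ?thesis using nn_integral_chi2_density[OF assms] by simp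
qed

lemma chi2_tail_nonpos:
  assumes "k > 0" "s \<le> 0"
  shows "chi2_tail k s = 1"
proof -
  have "chi2_tail k s = (\<integral>\<^sup>+y. ennreal (chi2_density k y) \<partial>lborel)"
    unfolding chi2_tail_def using assms(2)
    by (intro nn_integral_cong) (auto simp: chi2_density_nonpos split: split_indicator)
  thus ?thesis using nn_integral_chi2_density[OF assms(1)] by simp
qed

lemma nn_integral_exp_tail:
  fixes l s D :: real
  assumes "l > 0" "D \<ge> 0"
  shows "(\<integral>\<^sup>+y. ennreal (D * exp (- l * (y - s))) * indicator {s<..} y \<partial>lborel) = ennreal (D / l)"
proof -
  have "(\<integral>\<^sup>+y. ennreal (exp (- l * (y - s))) * indicator {s..} y \<partial>lborel) = ennreal (0 - (- exp (- l * (s - s)) / l))"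
  proof (rule nn_integral_FTC_atLeast[where F="\<lambda>y. - exp (- l * (y - s)) / l" and f="\<lambda>y. exp (- l * (y - s))"])
    fix x :: real
    show "((\<lambda>y. - exp (- l * (y - s)) / l) has_real_derivative exp (- l * (x - s))) (at x)"
      using assms by (auto intro!: derivative_eq_intros simp: field_simps)
    show "((\<lambda>y. - exp (- l * (y - s)) / l) \<longlongrightarrow> 0) at_top"
      using assms by real_asymp
  qed auto
  moreover have "(\<integral>\<^sup>+y. ennreal (exp (- l * (y - s))) * indicator {s<..} y \<partial>lborel) =
      (\<integral>\<^sup>+y. ennreal (exp (- l * (y - s))) * indicator {s..} y \<partial>lborel)"
    by (intro nn_integral_cong_AE) (auto intro!: AE_I[where N="{s}"] split: split_indicator)
  ultimately have "(\<integral>\<^sup>+y. ennreal (exp (- l * (y - s))) * indicator {s<..} y \<partial>lborel) = ennreal (1 / l)"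
    by simp
  moreover have "(\<integral>\<^sup>+y. ennreal (D * exp (- l * (y - s))) * indicator {s<..} y \<partial>lborel) =
      ennreal D * (\<integral>\<^sup>+y. ennreal (exp (- l * (y - s))) * indicator {s<..} y \<partial>lborel)"
    using assms by (subst nn_integral_cmult[symmetric]) (auto simp: ennreal_mult mult.assoc)
  ultimately show ?thesis using assms by (simp add: ennreal_mult[symmetric])
qed

lemma chi2_density_ge_exp:
  assumes "k \<ge> 2" "0 < s" "s \<le> y"
  shows "chi2_density k s * exp (- (1/2) * (y - s)) \<le> chi2_density k y"
proof -
  define C where "C = 2 powr (real k / 2) * Gamma (real k / 2)"
  have C: "C > 0" using assms by (simp add: C_def Gamma_real_pos)
  have "s powr (real k / 2 - 1) * exp (- s / 2) * exp (- (1/2) * (y - s)) = s powr (real k / 2 - 1) * exp (- y / 2)"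
    by (simp add: mult.assoc exp_add[symmetric] field_simps)
  also have "\<dots> \<le> y powr (real k / 2 - 1) * exp (- y / 2)"
    using assms by (intro mult_right_mono powr_mono2) auto
  finally have "s powr (real k / 2 - 1) * exp (- s / 2) * exp (- (1/2) * (y - s)) / C \<le> y powr (real k / 2 - 1) * exp (- y / 2) / C"
    using C by (intro divide_right_mono) auto
  thus ?thesis using assms by (simp add: chi2_density_pos C_def)
qed

lemma chi2_density_le_exp:
  assumes "k \<ge> 2" "0 < s" "s \<le> y"
  shows "chi2_density k y \<le> chi2_density k s * exp (- (1/2 - (real k / 2 - 1) / s) * (y - s))"
proof -
  define \<alpha> where "\<alpha> = real k / 2 - 1"
  define C where "C = 2 powr (real k / 2) * Gamma (real k / 2)"
  have C: "C > 0" using assms by (simp add: C_def Gamma_real_pos)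
  have \<alpha>: "\<alpha> \<ge> 0" using assms by (simp add: \<alpha>_def)
  have "ln y \<le> ln s + (y / s - 1)"
    using ln_le_minus_one[of "y / s"] assms by (simp add: ln_div)
  hence "exp (\<alpha> * ln y) \<le> exp (\<alpha> * (ln s + (y / s - 1)))"
    using \<alpha> by (simp add: mult_left_mono)
  hence "y powr \<alpha> \<le> s powr \<alpha> * exp (\<alpha> * (y / s - 1))"
    using assms by (simp add: powr_def distrib_left exp_add mult.commute)
  hence "y powr \<alpha> * exp (- y / 2) \<le> s powr \<alpha> * exp (\<alpha> * (y / s - 1)) * exp (- y / 2)"
    by (rule mult_right_mono) simp
  also have "\<dots> = s powr \<alpha> * exp (- s / 2) * exp (- (1/2 - \<alpha> / s) * (y - s))"
    using assms by (simp add: mult.assoc exp_add[symmetric] field_simps)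
  finally have "y powr \<alpha> * exp (- y / 2) / C \<le> s powr \<alpha> * exp (- s / 2) * exp (- (1/2 - \<alpha> / s) * (y - s)) / C"
    using C by (intro divide_right_mono) auto
  thus ?thesis using assms by (simp add: chi2_density_pos C_def \<alpha>_def)
qed

lemma chi2_tail_ge:
  assumes "k \<ge> 2" "s > 0"
  shows "ennreal (2 * chi2_density k s) \<le> chi2_tail k s"
proof -
  have "ennreal (2 * chi2_density k s) =
      (\<integral>\<^sup>+y. ennreal (chi2_density k s * exp (- (1/2) * (y - s))) * indicator {s<..} y \<partial>lborel)"
    by (subst nn_integral_exp_tail) (auto simp: chi2_density_nonneg)
  also have "\<dots> \<le> chi2_tail k s"
    unfolding chi2_tail_def
  proof (intro nn_integral_mono)
    fix y
    show "ennreal (chi2_density k s * exp (- (1/2) * (y - s))) * indicator {s<..} y \<le>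
        ennreal (chi2_density k y) * indicator {s<..} y"
      using chi2_density_ge_exp[OF assms, of y] by (auto intro: ennreal_leI split: split_indicator)
  qed
  finally show ?thesis .
qed

lemma chi2_tail_le:
  assumes "k \<ge> 2" "s > 0" "s > real k - 2"
  shows "chi2_tail k s \<le> ennreal (2 * chi2_density k s * s / (s - real k + 2))"
proof -
  define l where "l = 1/2 - (real k / 2 - 1) / s"
  have l: "l > 0" using assms by (simp add: l_def field_simps)
  have "chi2_tail k s \<le> (\<integral>\<^sup>+y. ennreal (chi2_density k s * exp (- l * (y - s))) * indicator {s<..} y \<partial>lborel)"
    unfolding chi2_tail_def
  proof (intro nn_integral_mono)
    fix y
    show "ennreal (chi2_density k y) * indicator {s<..} y \<le>
        ennreal (chi2_density k s * exp (- l * (y - s))) * indicator {s<..} y"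
      using chi2_density_le_exp[OF assms(1,2), of y] unfolding l_def
      by (auto intro: ennreal_leI split: split_indicator)
  qed
  also have "\<dots> = ennreal (chi2_density k s / l)"
    using l by (intro nn_integral_exp_tail) (auto simp: chi2_density_nonneg)
  also have "chi2_density k s / l = 2 * chi2_density k s * s / (s - real k + 2)"
    using assms by (simp add: l_def field_simps)
  finally show ?thesis .
qed

section \<open>The nested chi-square probability\<close>

text \<open>The constant K of the theorem, for b = I1, k = I2 and R = r2^2.\<close>
definition chi2_pair_const :: "nat \<Rightarrow> nat \<Rightarrow> real \<Rightarrow> real" where
  "chi2_pair_const b k R = exp (- (R - real k) / 2) /
     (2 powr (real b / 2) * sqrt pi * real k powr ((real k - 1) / 2) * Gamma (real b / 2))"

lemma chi2_pair_const_pos: "b \<ge> 1 \<Longrightarrow> k \<ge> 1 \<Longrightarrow> chi2_pair_const b k R > 0"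
  unfolding chi2_pair_const_def by (simp add: Gamma_real_pos)

lemma chi2_density_mult_eq:
  assumes "b \<ge> 1" "k \<ge> 1" "0 < t" "t < R"
  shows "chi2_density b t * chi2_density k (R - t) =
    chi2_pair_const b k R * (sqrt pi * real k powr ((real k - 1) / 2) /
      (exp (real k / 2) * 2 powr (real k / 2) * Gamma (real k / 2))) *
    (t powr (real b / 2 - 1) * (R - t) powr (real k / 2 - 1))"
proof -
  have exp_split: "exp (- (R - real k) / 2) = exp (- t / 2) * exp (- (R - t) / 2) * exp (real k / 2)"
    by (simp add: exp_add[symmetric] field_simps)
  have "Gamma (real b / 2) > 0" "Gamma (real k / 2) > 0" "real k powr ((real k - 1) / 2) > 0"
    using assms by (auto intro!: Gamma_real_pos)
  thus ?thesis
    using assms unfolding chi2_pair_const_def exp_split by (simp add: chi2_density_pos field_simps)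
qed

lemma chi2_density_mult_ge:
  assumes "b \<ge> 1" "k \<ge> 2" "0 < t" "t < R"
  shows "sqrt pi * chi2_pair_const b k R / 2 * ((R - t) powr (real k / 2 - 1) * t powr (real b / 2 - 1))
         \<le> chi2_density b t * (2 * chi2_density k (R - t))"
proof -
  define E where "E = exp (real k / 2) * 2 powr (real k / 2) * Gamma (real k / 2)"
  define P where "P = real k powr ((real k - 1) / 2)"
  define KY where "KY = chi2_pair_const b k R * (t powr (real b / 2 - 1) * (R - t) powr (real k / 2 - 1))"
  have eq: "chi2_density b t * chi2_density k (R - t) = sqrt pi * P / E * KY"
    using chi2_density_mult_eq[of b k t R] assms unfolding E_def P_def KY_def by (simp add: mult_ac)
  have "E > 0" "P > 0" "KY \<ge> 0"
    using assms chi2_pair_const_pos[of b k R] by (auto simp: E_def P_def KY_def Gamma_real_pos)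
  moreover have "E \<le> 4 * P" unfolding E_def P_def by (rule chi2_normalizer_bounds(2)[OF assms(2)])
  ultimately have "sqrt pi / 2 * KY \<le> 2 * (sqrt pi * P / E * KY)"
    by (subst mult.assoc[symmetric], intro mult_right_mono) (auto simp: field_simps)
  also have "\<dots> = chi2_density b t * (2 * chi2_density k (R - t))"
    unfolding eq[symmetric] by (simp add: mult_ac)
  finally show ?thesis by (simp add: KY_def mult_ac)
qed

lemma chi2_density_mult_le:
  assumes "b \<ge> 1" "k \<ge> 2" "0 < t" "t < R" "R - t > real k - 2"
  shows "chi2_density b t * (2 * chi2_density k (R - t) * (R - t) / ((R - t) - real k + 2))
         \<le> chi2_pair_const b k R * (t powr (real b / 2 - 1) * (R - t) powr (real k / 2) / (R - real k + 2 - t))"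
proof -
  define E where "E = exp (real k / 2) * 2 powr (real k / 2) * Gamma (real k / 2)"
  define P where "P = real k powr ((real k - 1) / 2)"
  define KY where "KY = chi2_pair_const b k R * (t powr (real b / 2 - 1) * (R - t) powr (real k / 2 - 1))"
  define q where "q = (R - t) / ((R - t) - real k + 2)"
  have eq: "chi2_density b t * chi2_density k (R - t) = sqrt pi * P / E * KY"
    using chi2_density_mult_eq[of b k t R] assms unfolding E_def P_def KY_def by (simp add: mult_ac)
  have "E > 0" "P > 0" "KY * q \<ge> 0"
    using assms chi2_pair_const_pos[of b k R] by (auto simp: E_def P_def KY_def q_def Gamma_real_pos)
  moreover have "2 * sqrt pi * P \<le> E" unfolding E_def P_def by (rule chi2_normalizer_bounds(1)[OF assms(2)])
  ultimately have bound: "2 * (sqrt pi * P / E) * (KY * q) \<le> KY * q"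
    by (intro mult_left_le_one_le) (auto simp: field_simps)
  have "chi2_density b t * (2 * chi2_density k (R - t) * (R - t) / ((R - t) - real k + 2)) =
      2 * (chi2_density b t * chi2_density k (R - t)) * q"
    by (simp add: q_def mult_ac)
  also have "\<dots> = 2 * (sqrt pi * P / E) * (KY * q)"
    unfolding eq by (simp add: mult_ac)
  also have "\<dots> \<le> KY * q" by (rule bound)
  also have "KY * q = chi2_pair_const b k R * (t powr (real b / 2 - 1) * ((R - t) powr (real k / 2 - 1) * (R - t)) / (R - real k + 2 - t))"
    by (simp add: KY_def q_def algebra_simps)
  also have "(R - t) powr (real k / 2 - 1) * (R - t) = (R - t) powr (real k / 2)"
    using assms by (simp add: powr_diff)
  finally show ?thesis .
qed

lemma nn_integral_eq_set_integral:
  fixes f :: "real \<Rightarrow> real"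
  assumes "set_integrable lborel S f" "\<And>x. x \<in> S \<Longrightarrow> 0 \<le> f x"
  shows "(\<integral>\<^sup>+x. ennreal (f x * indicator S x) \<partial>lborel) = ennreal (LBINT x:S. f x)"
proof -
  have "integrable lborel (\<lambda>x. f x * indicator S x)"
    using assms(1) unfolding set_integrable_def by (simp add: mult.commute)
  hence "(\<integral>\<^sup>+x. ennreal (f x * indicator S x) \<partial>lborel) = ennreal (\<integral>x. f x * indicator S x \<partial>lborel)"
    using assms(2) by (intro nn_integral_eq_integral) (auto split: split_indicator)
  thus ?thesis by (simp add: set_lebesgue_integral_def mult.commute)
qed

lemma set_integral_nonneg:
  assumes "\<And>x. x \<in> S \<Longrightarrow> 0 \<le> f x"
  shows "0 \<le> (LBINT x:S. (f x :: real))"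
  unfolding set_lebesgue_integral_def
  using assms by (intro integral_nonneg_AE AE_I2) (auto split: split_indicator)

lemma set_integrable_chi2_density:
  assumes "k > 0" "S \<in> sets borel"
  shows "set_integrable lborel S (chi2_density k)"
  unfolding set_integrable_def
proof (rule integrableI_nonneg)
  have "(\<integral>\<^sup>+x. ennreal (indicator S x *\<^sub>R chi2_density k x) \<partial>lborel) \<le> (\<integral>\<^sup>+x. ennreal (chi2_density k x) \<partial>lborel)"
    by (intro nn_integral_mono) (auto simp: chi2_density_nonneg split: split_indicator)
  thus "(\<integral>\<^sup>+x. ennreal (indicator S x *\<^sub>R chi2_density k x) \<partial>lborel) < \<infinity>"
    using nn_integral_chi2_density[OF assms(1)] by (simp add: le_less_trans)
qed (use assms in \<open>auto simp: chi2_density_nonneg\<close>)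

lemma nn_integral_chi2_tail_le_1:
  assumes "b > 0" "k > 0"
  shows "(\<integral>\<^sup>+x. ennreal (chi2_density b x) * indicator {R1<..} x * chi2_tail k (R - x) \<partial>lborel) \<le> 1"
proof -
  have "(\<integral>\<^sup>+x. ennreal (chi2_density b x) * indicator {R1<..} x * chi2_tail k (R - x) \<partial>lborel)
      \<le> (\<integral>\<^sup>+x. ennreal (chi2_density b x) \<partial>lborel)"
  proof (intro nn_integral_mono)
    fix x
    have "indicator {R1<..} x * chi2_tail k (R - x) \<le> 1"
      using chi2_tail_le_1[OF assms(2)] by (simp split: split_indicator)
    thus "ennreal (chi2_density b x) * indicator {R1<..} x * chi2_tail k (R - x) \<le> ennreal (chi2_density b x)"
      using mult_left_mono[of _ 1 "ennreal (chi2_density b x)"] by (simp add: mult.assoc)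
  qed
  thus ?thesis using nn_integral_chi2_density[OF assms(1)] by simp
qed

lemma chi2_tail_integrand_ge:
  assumes "b \<ge> 1" "k \<ge> 2" "0 < R1" "R1 < R"
  shows "ennreal (chi2_density b x * indicator {R<..} x) +
      ennreal (sqrt pi * chi2_pair_const b k R / 2 * ((R - x) powr (real k / 2 - 1) * x powr (real b / 2 - 1)) * indicator {R1<..<R} x)
    \<le> ennreal (chi2_density b x) * indicator {R1<..} x * chi2_tail k (R - x)"
proof -
  consider "R < x" | "R1 < x" "x < R" | "x \<le> R1 \<or> x = R" by linarith
  thus ?thesis
  proof cases
    case 1
    thus ?thesis using assms chi2_tail_nonpos[of k "R - x"] by (simp add: indicator_def)
  next
    case 2
    have "ennreal (sqrt pi * chi2_pair_const b k R / 2 * ((R - x) powr (real k / 2 - 1) * x powr (real b / 2 - 1)))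
        \<le> ennreal (chi2_density b x) * ennreal (2 * chi2_density k (R - x))"
      using chi2_density_mult_ge[of b k x R] 2 assms
      by (simp add: ennreal_mult'[symmetric] chi2_density_nonneg del: ennreal_mult')
    also have "\<dots> \<le> ennreal (chi2_density b x) * chi2_tail k (R - x)"
      using 2 assms by (intro mult_left_mono chi2_tail_ge) auto
    finally show ?thesis using 2 assms by (simp add: indicator_def)
  next
    case 3
    thus ?thesis using assms by (auto simp: indicator_def)
  qed
qed

text \<open>Pr(X > R1, X + Y > R) for independent chi-square variables X and Y with b and k degrees of freedom.\<close>
definition chi2_nested_tail :: "nat \<Rightarrow> nat \<Rightarrow> real \<Rightarrow> real \<Rightarrow> real" where
  "chi2_nested_tail b k R1 R =
     enn2real (\<integral>\<^sup>+x. ennreal (chi2_density b x) * indicator {R1<..} x * chi2_tail k (R - x) \<partial>lborel)"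

lemma chi2_nested_tail_ge:
  assumes "b \<ge> 1" "k \<ge> 2" "0 < R1" "R1 < R"
  shows "(LBINT t:{R<..}. chi2_density b t) + sqrt pi * chi2_pair_const b k R / 2 *
           (LBINT t=R1..R. (R - t) powr (real k / 2 - 1) * t powr (real b / 2 - 1))
    \<le> chi2_nested_tail b k R1 R"
proof -
  let ?N = "\<integral>\<^sup>+x. ennreal (chi2_density b x) * indicator {R1<..} x * chi2_tail k (R - x) \<partial>lborel"
  have N_le_1: "?N \<le> 1" using assms by (intro nn_integral_chi2_tail_le_1) auto
  define L where "L t = sqrt pi * chi2_pair_const b k R / 2 * ((R - t) powr (real k / 2 - 1) * t powr (real b / 2 - 1))" for t
  have L_nonneg: "L t \<ge> 0" for t
    using chi2_pair_const_pos[of b k R] assms by (simp add: L_def)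
  have [measurable]: "L \<in> borel_measurable borel" unfolding L_def by measurable
  have "(\<integral>\<^sup>+x. ennreal (chi2_density b x * indicator {R<..} x) \<partial>lborel) +
        (\<integral>\<^sup>+x. ennreal (L x * indicator {R1<..<R} x) \<partial>lborel) =
      (\<integral>\<^sup>+x. ennreal (chi2_density b x * indicator {R<..} x) + ennreal (L x * indicator {R1<..<R} x) \<partial>lborel)"
    by (simp add: nn_integral_add)
  also have "\<dots> \<le> ?N"
    unfolding L_def using assms by (intro nn_integral_mono chi2_tail_integrand_ge)
  finally have sum_le: "(\<integral>\<^sup>+x. ennreal (chi2_density b x * indicator {R<..} x) \<partial>lborel) +
        (\<integral>\<^sup>+x. ennreal (L x * indicator {R1<..<R} x) \<partial>lborel) \<le> ?N" .
  have "set_integrable lborel {R1<..<R} L"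
    unfolding set_integrable_def
  proof (rule integrableI_nonneg)
    have "(\<integral>\<^sup>+x. ennreal (L x * indicator {R1<..<R} x) \<partial>lborel) \<le> 1"
      using order_trans[OF add_increasing[OF zero_le order_refl] sum_le] N_le_1 by simp
    thus "(\<integral>\<^sup>+x. ennreal (indicator {R1<..<R} x *\<^sub>R L x) \<partial>lborel) < \<infinity>"
      by (simp add: mult.commute le_less_trans)
  qed (use L_nonneg in \<open>auto split: split_indicator\<close>)
  moreover have "set_integrable lborel {R<..} (chi2_density b)"
    using assms by (intro set_integrable_chi2_density) auto
  moreover have nonneg: "0 \<le> (LBINT t:{R<..}. chi2_density b t)" "0 \<le> (LBINT x:{R1<..<R}. L x)"
    by (auto intro!: set_integral_nonneg chi2_density_nonneg L_nonneg)
  ultimately have "ennreal ((LBINT t:{R<..}. chi2_density b t) + (LBINT x:{R1<..<R}. L x)) \<le> ?N"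
    using sum_le L_nonneg by (simp add: nn_integral_eq_set_integral chi2_density_nonneg)
  hence "enn2real (ennreal ((LBINT t:{R<..}. chi2_density b t) + (LBINT x:{R1<..<R}. L x))) \<le> enn2real ?N"
    using N_le_1 by (intro enn2real_mono) (auto simp: ennreal_one_less_top le_less_trans)
  hence "(LBINT t:{R<..}. chi2_density b t) + (LBINT x:{R1<..<R}. L x) \<le> chi2_nested_tail b k R1 R"
    using nonneg by (simp add: chi2_nested_tail_def del: ennreal_plus)
  moreover have "(LBINT x:{R1<..<R}. L x) = sqrt pi * chi2_pair_const b k R / 2 *
      (LBINT t=R1..R. (R - t) powr (real k / 2 - 1) * t powr (real b / 2 - 1))"
    using assms unfolding L_def by (simp add: interval_integral_Ioo set_integral_mult_right)
  ultimately show ?thesis by simp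
qed

lemma chi2_tail_integrand_le:
  assumes "b \<ge> 1" "k \<ge> 2" "0 < R1" "R1 < a" "a < R" "R - a > real k - 2" "x \<noteq> a" "x \<noteq> R"
  shows "ennreal (chi2_density b x) * indicator {R1<..} x * chi2_tail k (R - x) \<le>
      ennreal (chi2_density b x * indicator {R<..} x) +
      ennreal (chi2_pair_const b k R * (x powr (real b / 2 - 1) * (R - x) powr (real k / 2) / (R - real k + 2 - x)) *
        indicator {R1<..<a} x) +
      ennreal (chi2_density b x * indicator {a<..<R} x)"
proof -
  have le_density: "ennreal (chi2_density b x) * chi2_tail k (R - x) \<le> ennreal (chi2_density b x)"
    using mult_left_mono[OF chi2_tail_le_1, of k "ennreal (chi2_density b x)" "R - x"] assms by simp
  consider "x \<le> R1" | "R1 < x" "x < a" | "a < x" "x < R" | "R < x" using assms by linarith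
  thus ?thesis
  proof cases
    case 2
    have "ennreal (chi2_density b x) * chi2_tail k (R - x) \<le>
        ennreal (chi2_density b x) * ennreal (2 * chi2_density k (R - x) * (R - x) / ((R - x) - real k + 2))"
      using 2 assms by (intro mult_left_mono chi2_tail_le) auto
    also have "\<dots> \<le> ennreal (chi2_pair_const b k R * (x powr (real b / 2 - 1) * (R - x) powr (real k / 2) / (R - real k + 2 - x)))"
      using chi2_density_mult_le[of b k x R] 2 assms
      by (simp add: ennreal_mult'[symmetric] chi2_density_nonneg ennreal_leI del: ennreal_mult')
    finally show ?thesis using 2 assms by (simp add: indicator_def)
  qed (use assms le_density in \<open>auto simp: indicator_def\<close>)
qed

lemma chi2_nested_tail_le:
  assumes "b \<ge> 1" "k \<ge> 2" "0 < R1" "R1 < a" "a < R" "R - a > real k - 2"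
  shows "chi2_nested_tail b k R1 R
    \<le> (LBINT t:{R<..}. chi2_density b t) +
        (chi2_pair_const b k R * (LBINT t=R1..a. t powr (real b / 2 - 1) * (R - t) powr (real k / 2) / (R - real k + 2 - t))
         + (LBINT t=a..R. chi2_density b t))"
proof -
  define g where "g t = chi2_pair_const b k R * (t powr (real b / 2 - 1) * (R - t) powr (real k / 2) / (R - real k + 2 - t))" for t
  have g_nonneg: "g t \<ge> 0" if "t \<in> {R1<..<a}" for t
    using that assms chi2_pair_const_pos[of b k R] by (auto simp: g_def intro!: divide_nonneg_pos)
  have [measurable]: "g \<in> borel_measurable borel" unfolding g_def by measurable
  have "continuous_on {R1..a} g"
    unfolding g_def using assms by (auto intro!: continuous_intros)
  hence "set_integrable lborel {R1<..<a} g"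
    by (intro set_integrable_subset[OF borel_integrable_atLeastAtMost']) auto
  hence g_integral: "(\<integral>\<^sup>+x. ennreal (g x * indicator {R1<..<a} x) \<partial>lborel) = ennreal (LBINT t:{R1<..<a}. g t)"
    by (rule nn_integral_eq_set_integral) (rule g_nonneg)
  have chi2_integrable: "set_integrable lborel S (chi2_density b)" if "S \<in> sets borel" for S
    using assms that by (intro set_integrable_chi2_density) auto
  have nonneg: "0 \<le> (LBINT t:{R<..}. chi2_density b t)" "0 \<le> (LBINT t:{R1<..<a}. g t)"
      "0 \<le> (LBINT t:{a<..<R}. chi2_density b t)"
    using g_nonneg by (auto intro!: set_integral_nonneg chi2_density_nonneg)
  have "(\<integral>\<^sup>+x. ennreal (chi2_density b x * indicator {R<..} x) + ennreal (g x * indicator {R1<..<a} x)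
        + ennreal (chi2_density b x * indicator {a<..<R} x) \<partial>lborel) =
      (\<integral>\<^sup>+x. ennreal (chi2_density b x * indicator {R<..} x) \<partial>lborel) + (\<integral>\<^sup>+x. ennreal (g x * indicator {R1<..<a} x) \<partial>lborel)
        + (\<integral>\<^sup>+x. ennreal (chi2_density b x * indicator {a<..<R} x) \<partial>lborel)"
    by (simp add: nn_integral_add)
  also have "\<dots> = ennreal ((LBINT t:{R<..}. chi2_density b t) + ((LBINT t:{R1<..<a}. g t) + (LBINT t:{a<..<R}. chi2_density b t)))"
    unfolding g_integral using chi2_integrable nonneg by (simp add: nn_integral_eq_set_integral chi2_density_nonneg add.assoc)
  finally have integrals: "(\<integral>\<^sup>+x. ennreal (chi2_density b x * indicator {R<..} x) + ennreal (g x * indicator {R1<..<a} x)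
        + ennreal (chi2_density b x * indicator {a<..<R} x) \<partial>lborel) =
      ennreal ((LBINT t:{R<..}. chi2_density b t) + ((LBINT t:{R1<..<a}. g t) + (LBINT t:{a<..<R}. chi2_density b t)))" .
  have "(\<integral>\<^sup>+x. ennreal (chi2_density b x) * indicator {R1<..} x * chi2_tail k (R - x) \<partial>lborel) \<le>
      (\<integral>\<^sup>+x. ennreal (chi2_density b x * indicator {R<..} x) + ennreal (g x * indicator {R1<..<a} x)
        + ennreal (chi2_density b x * indicator {a<..<R} x) \<partial>lborel)"
  proof (intro nn_integral_mono_AE)
    show "AE x in lborel. ennreal (chi2_density b x) * indicator {R1<..} x * chi2_tail k (R - x) \<le>
        ennreal (chi2_density b x * indicator {R<..} x) + ennreal (g x * indicator {R1<..<a} x)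
        + ennreal (chi2_density b x * indicator {a<..<R} x)"
      using AE_lborel_singleton[of a] AE_lborel_singleton[of R]
    proof eventually_elim
      case (elim x)
      show ?case unfolding g_def by (rule chi2_tail_integrand_le) (use assms elim in auto)
    qed
  qed
  hence "chi2_nested_tail b k R1 R \<le> (LBINT t:{R<..}. chi2_density b t) + ((LBINT t:{R1<..<a}. g t)
        + (LBINT t:{a<..<R}. chi2_density b t))"
    unfolding chi2_nested_tail_def integrals using nonneg by (intro enn2real_leI) auto
  also have "(LBINT t:{R1<..<a}. g t) =
      chi2_pair_const b k R * (LBINT t:{R1<..<a}. t powr (real b / 2 - 1) * (R - t) powr (real k / 2) / (R - real k + 2 - t))"
    unfolding g_def by (rule set_integral_mult_right)
  finally show ?thesis using assms by (simp add: interval_integral_Ioo)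
qed

lemma (in prob_space) measure_sum_squares_gt_eq_chi2_nested_tail:
  assumes indep: "indep_vars (\<lambda>_. borel) z {1..}"
    and normal: "\<And>i. i \<ge> 1 \<Longrightarrow> distributed M lborel (z i) std_normal_density"
    and "I1 \<ge> 1" "I2 \<ge> 1"
  shows "measure M ({\<omega> \<in> space M. (\<Sum>j = 1..I1. (z j \<omega>)\<^sup>2) > R1} \<inter> {\<omega> \<in> space M. (\<Sum>j = 1..I1 + I2. (z j \<omega>)\<^sup>2) > R})
    = chi2_nested_tail I1 I2 R1 R"
proof -
  define X where "X = (\<lambda>\<omega>. \<Sum>j = 1..I1. (z j \<omega>)\<^sup>2)"
  define Y where "Y = (\<lambda>\<omega>. \<Sum>j = I1 + 1..I1 + I2. (z j \<omega>)\<^sup>2)"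
  have distX: "distributed M lborel X (chi2_density I1)"
    using distributed_sum_squares_std_normal[OF indep normal, of "{1..I1}"] assms by (simp add: X_def)
  have distY: "distributed M lborel Y (chi2_density I2)"
    using distributed_sum_squares_std_normal[OF indep normal, of "{I1 + 1..I1 + I2}"] assms by (simp add: Y_def)
  have "indep_var borel X borel Y"
    unfolding X_def Y_def
    using indep_vars_compose2[OF indep, of "\<lambda>_ x. x ^ 2" "\<lambda>_. borel"]
    by (intro indep_var_sum_disjoint) auto
  hence "emeasure M {\<omega> \<in> space M. R1 < X \<omega> \<and> R < X \<omega> + Y \<omega>} =
      (\<integral>\<^sup>+x. ennreal (chi2_density I1 x) * indicator {R1<..} x * chi2_tail I2 (R - x) \<partial>lborel)"
    unfolding chi2_tail_def using distX distY by (rule emeasure_indep_first_and_sum_gt)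
  moreover have "(\<Sum>j = 1..I1 + I2. (z j \<omega>)\<^sup>2) = X \<omega> + Y \<omega>" for \<omega>
    unfolding X_def Y_def using assms by (intro sum.ub_add_nat) simp
  hence "{\<omega> \<in> space M. (\<Sum>j = 1..I1. (z j \<omega>)\<^sup>2) > R1} \<inter> {\<omega> \<in> space M. (\<Sum>j = 1..I1 + I2. (z j \<omega>)\<^sup>2) > R}
      = {\<omega> \<in> space M. R1 < X \<omega> \<and> R < X \<omega> + Y \<omega>}"
    by (auto simp: X_def)
  ultimately show ?thesis by (simp add: measure_def chi2_nested_tail_def)
qed

lemma ereal_le_add_INF:
  assumes "\<And>\<delta>. \<delta> \<in> D \<Longrightarrow> x \<le> p + f \<delta>"
  shows "ereal x \<le> ereal p + (INF \<delta>\<in>D. ereal (f \<delta>))"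
proof -
  have "ereal (x - p) \<le> (INF \<delta>\<in>D. ereal (f \<delta>))"
    using assms by (intro INF_greatest) (simp add: algebra_simps)
  hence "ereal p + ereal (x - p) \<le> ereal p + (INF \<delta>\<in>D. ereal (f \<delta>))"
    by (rule add_left_mono)
  thus ?thesis by simp
qed

theorem theorem2:
  fixes M :: "'a measure" and z :: "nat \<Rightarrow> 'a \<Rightarrow> real"
    and I1 I2 :: nat and r1 r2 :: real
  assumes "prob_space M"
    and "prob_space.indep_vars M (\<lambda>_. borel) z {1..}"
    and "\<And>i. i \<ge> 1 \<Longrightarrow> distributed M lborel (z i) std_normal_density"
    and "I1 \<ge> 1" and "I2 \<ge> 2"
    and "0 < r1" and "r1 < r2"
  shows
    "let N1 = I1; N2 = I1 + I2;
         \<zeta>1 = {\<omega> \<in> space M. (\<Sum>j = 1..N1. (z j \<omega>)\<^sup>2) > r1\<^sup>2};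
         \<zeta>2 = {\<omega> \<in> space M. (\<Sum>j = 1..N2. (z j \<omega>)\<^sup>2) > r2\<^sup>2};
         p = (LBINT t:{r2\<^sup>2<..}. chi2_density I1 t);
         K = exp (- (r2\<^sup>2 - real I2) / 2) /
             (2 powr (real N1 / 2) * sqrt pi * real I2 powr ((real I2 - 1) / 2) * Gamma (real N1 / 2));
         g = (\<lambda>t. t powr (real N1 / 2 - 1) * (r2\<^sup>2 - t) powr (real I2 / 2) / (r2\<^sup>2 - real I2 + 2 - t));
         \<delta>lo = (real I2 - 2) / r2\<^sup>2;
         \<delta>hi = (r2\<^sup>2 - r1\<^sup>2) / r2\<^sup>2
     in p + sqrt pi * K / 2 *
              (LBINT t=r1\<^sup>2..r2\<^sup>2. (r2\<^sup>2 - t) powr (real I2 / 2 - 1) * t powr (real I1 / 2 - 1))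
          \<le> measure M (\<zeta>1 \<inter> \<zeta>2)
      \<and> ereal (measure M (\<zeta>1 \<inter> \<zeta>2)) \<le>
          ereal p + (INF \<delta>\<in>{\<delta>lo<..<\<delta>hi}.
             ereal (K * (LBINT t=r1\<^sup>2..(1 - \<delta>) * r2\<^sup>2. g t)
                    + (LBINT t=(1 - \<delta>) * r2\<^sup>2..r2\<^sup>2. chi2_density I1 t)))"
proof -
  interpret prob_space M by fact
  define R1 R where "R1 = r1\<^sup>2" and "R = r2\<^sup>2"
  have R: "0 < R1" "R1 < R"
    using assms(6,7) by (auto simp: R1_def R_def intro: power_strict_mono)
  have upper: "chi2_nested_tail I1 I2 R1 R \<le> (LBINT t:{R<..}. chi2_density I1 t) +
      (chi2_pair_const I1 I2 R * (LBINT t=R1..(1 - \<delta>) * R. t powr (real I1 / 2 - 1) * (R - t) powr (real I2 / 2) / (R - real I2 + 2 - t))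
       + (LBINT t=(1 - \<delta>) * R..R. chi2_density I1 t))"
    if "\<delta> \<in> {(real I2 - 2) / R<..<(R - R1) / R}" for \<delta>
  proof (rule chi2_nested_tail_le)
    have "real I2 - 2 < \<delta> * R" "\<delta> * R < R - R1"
      using that R by (auto simp: field_simps)
    moreover from this(1) assms(5) have "0 < \<delta> * R" by linarith
    ultimately show "R1 < (1 - \<delta>) * R" "(1 - \<delta>) * R < R" "R - (1 - \<delta>) * R > real I2 - 2"
      by (auto simp: algebra_simps)
  qed (use assms R in auto)
  have "measure M ({\<omega> \<in> space M. (\<Sum>j = 1..I1. (z j \<omega>)\<^sup>2) > R1} \<inter> {\<omega> \<in> space M. (\<Sum>j = 1..I1 + I2. (z j \<omega>)\<^sup>2) > R})
      = chi2_nested_tail I1 I2 R1 R"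
    using assms(4,5) by (intro measure_sum_squares_gt_eq_chi2_nested_tail assms(2,3)) auto
  thus ?thesis
    unfolding Let_def R1_def[symmetric] R_def[symmetric] chi2_pair_const_def[symmetric]
    using chi2_nested_tail_ge[of I1 I2 R1 R] upper assms(4,5) R by (auto intro!: ereal_le_add_INF)
qed

end
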